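(* Let $\mathbf A,\mathbf B$ be complete perfect DqRAs and $h:\mathbf A\to\mathbf B$ a complete homomorphism. Define $h_+:J^\infty(\mathbf B)\to J^\infty(\mathbf A)$ by $h_+(b)=\bigwedge\{a\in A\mid b\leqslant h(a)\}$. Then: (i) $h_+$ is a DqRA-frame morphism from $\mathbf B_+$ to $\mathbf A_+$, i.e. in addition to being a DInFL-frame morphism it satisfies $h_+(b^\neg)=h_+(b)^\neg$ for all $b\in J^\infty(\mathbf B)$; (ii) if $h$ is surjective then $h_+$ is an order-embedding; (iii) if $h$ is injective then $h_+$ is surjective.
   Context: A DqRA is $(A,\wedge,\vee,\cdot,1,\sim,-,\neg)$ with $(A,\wedge,\vee)$ a distributive lattice, $(A,\cdot,1)$ a monoid, $a\cdot b\leqslant c\iff a\leqslant -(b\cdot{\sim}c)\iff b\leqslant{\sim}(-c\cdot a)$, $\neg\neg a=a$, $\neg(a\wedge b)=\neg a\vee\neg b$, and $\neg(a\cdot b)=\neg a+\neg b$ where $a+b=-({\sim}b\cdot{\sim}a)$. Complete perfect: complete, every element the join of completely join-irreducibles ($J^\infty$) below it and meet of completely meet-irreducibles above it. A complete homomorphism preserves all operations and arbitrary joins and meets. $\kappa(j)=\bigvee\{a\mid j\not\leqslant a\}$. $\mathbf A_+=(J^\infty(\mathbf A),I_1,\preccurlyeq,\circ,{}^\sim,{}^-,{}^\neg)$ with $I_1=\{i\in J^\infty(\mathbf A)\mid i\leqslant 1\}$, $a\preccurlyeq b$ iff $b\leqslant a$, $c\in a\circ b$ iff $c\leqslant a\cdot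 b$, $a^\sim={\sim}\kappa(a)$, $a^-=-\kappa(a)$, $a^\neg=\neg\kappa(a)$. A DInFL-frame morphism between $(W_1,I_1,\preccurlyeq_1,\circ_1,{}^{\sim_1},{}^{-_1})$ and $(W_2,I_2,\preccurlyeq_2,\circ_2,{}^{\sim_2},{}^{-_2})$ is $f:W_1\to W_2$ with, for all $x,y,z\in W_1$, $u,v\in W_2$: (M1) $x\preccurlyeq_1 y\Rightarrow f(x)\preccurlyeq_2 f(y)$; (M2) $z\in x\circ_1 y\Rightarrow f(z)\in f(x)\circ_2 f(y)$; (M3) if $f(z)\in u\circ_2 v$ then there exist $x,y$ with $u\preccurlyeq_2 f(x)$, $v\preccurlyeq_2 f(y)$, $z\in x\circ_1 y$; (M4) $f(x^{\sim_1})=f(x)^{\sim_2}$; (M5) $f(x^{-_1})=f(x)^{-_2}$; (M6) $I_1=f^{-1}[I_2]$. A DqRA-frame morphism additionally satisfies (M7) $f(x^{\neg_1})=f(x)^{\neg_2}$. *)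

theory Defs
  imports Main
begin

text \<open>A DqRA on a (complete) lattice type 'a: the lattice operations are those of
  the type; the remaining operations are collected in a record.\<close>

record 'a dqra_ops =
  mul  :: "'a \<Rightarrow> 'a \<Rightarrow> 'a"
  one  :: "'a"
  tl   :: "'a \<Rightarrow> 'a"
  mn   :: "'a \<Rightarrow> 'a"
  ng   :: "'a \<Rightarrow> 'a"

definition dplus :: "('a, 'b) dqra_ops_scheme \<Rightarrow> 'a \<Rightarrow> 'a \<Rightarrow> 'a" where
  "dplus A a b = mn A (mul A (tl A b) (tl A a))"

definition is_DqRA :: "('a::lattice, 'b) dqra_ops_scheme \<Rightarrow> bool" where
  "is_DqRA A \<longleftrightarrow>
     (\<forall>a b c::'a. inf a (sup b c) = sup (inf a b) (inf a c)) \<and>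
     (\<forall>a b c. mul A (mul A a b) c = mul A a (mul A b c)) \<and>
     (\<forall>a. mul A (one A) a = a \<and> mul A a (one A) = a) \<and>
     (\<forall>a b c. (mul A a b \<le> c \<longleftrightarrow> a \<le> mn A (mul A b (tl A c))) \<and>
              (a \<le> mn A (mul A b (tl A c)) \<longleftrightarrow> b \<le> tl A (mul A (mn A c) a))) \<and>
     (\<forall>a. ng A (ng A a) = a) \<and>
     (\<forall>a b. ng A (inf a b) = sup (ng A a) (ng A b)) \<and>
     (\<forall>a b. ng A (mul A a b) = dplus A (ng A a) (ng A b))"

definition Jinf :: "'a::complete_lattice set" where
  "Jinf = {j. \<forall>S. j = Sup S \<longrightarrow> j \<in> S}"

definition Minf :: "'a::complete_lattice set" where
  "Minf = {m. \<forall>S. m = Inf S \<longrightarrow> m \<in> S}"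

definition perfect :: "'a::complete_lattice itself \<Rightarrow> bool" where
  "perfect _ \<longleftrightarrow> (\<forall>a::'a. a = Sup {j \<in> Jinf. j \<le> a} \<and> a = Inf {m \<in> Minf. a \<le> m})"

definition complete_perfect_DqRA :: "('a::complete_lattice, 'b) dqra_ops_scheme \<Rightarrow> bool" where
  "complete_perfect_DqRA A \<longleftrightarrow> is_DqRA A \<and> perfect TYPE('a)"

definition kappa :: "'a::complete_lattice \<Rightarrow> 'a" where
  "kappa j = Sup {a. \<not> j \<le> a}"

definition complete_hom ::
  "('a::complete_lattice, 'c) dqra_ops_scheme \<Rightarrow> ('b::complete_lattice, 'd) dqra_ops_scheme
    \<Rightarrow> ('a \<Rightarrow> 'b) \<Rightarrow> bool" where
  "complete_hom A B h \<longleftrightarrow>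
     (\<forall>a b. h (inf a b) = inf (h a) (h b)) \<and>
     (\<forall>a b. h (sup a b) = sup (h a) (h b)) \<and>
     (\<forall>a b. h (mul A a b) = mul B (h a) (h b)) \<and>
     h (one A) = one B \<and>
     (\<forall>a. h (tl A a) = tl B (h a)) \<and>
     (\<forall>a. h (mn A a) = mn B (h a)) \<and>
     (\<forall>a. h (ng A a) = ng B (h a)) \<and>
     (\<forall>S. h (Sup S) = Sup (h ` S)) \<and>
     (\<forall>S. h (Inf S) = Inf (h ` S))"

record 'a frame =
  W     :: "'a set"
  Iset  :: "'a set"
  prec  :: "'a \<Rightarrow> 'a \<Rightarrow> bool"
  circ  :: "'a \<Rightarrow> 'a \<Rightarrow> 'a set"
  ftl   :: "'a \<Rightarrow> 'a"
  fmn   :: "'a \<Rightarrow> 'a"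
  fng   :: "'a \<Rightarrow> 'a"

definition dual_frame :: "('a::complete_lattice, 'b) dqra_ops_scheme \<Rightarrow> 'a frame" where
  "dual_frame A =
     \<lparr> W = Jinf,
       Iset = {i \<in> Jinf. i \<le> one A},
       prec = (\<lambda>a b. b \<le> a),
       circ = (\<lambda>a b. {c \<in> Jinf. c \<le> mul A a b}),
       ftl = (\<lambda>a. tl A (kappa a)),
       fmn = (\<lambda>a. mn A (kappa a)),
       fng = (\<lambda>a. ng A (kappa a)) \<rparr>"

definition DInFL_frame_morphism :: "'a frame \<Rightarrow> 'b frame \<Rightarrow> ('a \<Rightarrow> 'b) \<Rightarrow> bool" where
  "DInFL_frame_morphism F G f \<longleftrightarrow>
     (\<forall>x\<in>W F. f x \<in> W G) \<and>
     (\<forall>x\<in>W F. \<forall>y\<in>W F. prec F x y \<longrightarrow> prec G (f x) (f y)) \<and>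
     (\<forall>x\<in>W F. \<forall>y\<in>W F. \<forall>z\<in>W F. z \<in> circ F x y \<longrightarrow> f z \<in> circ G (f x) (f y)) \<and>
     (\<forall>z\<in>W F. \<forall>u\<in>W G. \<forall>v\<in>W G. f z \<in> circ G u v \<longrightarrow>
        (\<exists>x\<in>W F. \<exists>y\<in>W F. prec G u (f x) \<and> prec G v (f y) \<and> z \<in> circ F x y)) \<and>
     (\<forall>x\<in>W F. f (ftl F x) = ftl G (f x)) \<and>
     (\<forall>x\<in>W F. f (fmn F x) = fmn G (f x)) \<and>
     Iset F = {x \<in> W F. f x \<in> Iset G}"

definition DqRA_frame_morphism :: "'a frame \<Rightarrow> 'b frame \<Rightarrow> ('a \<Rightarrow> 'b) \<Rightarrow> bool" where
  "DqRA_frame_morphism F G f \<longleftrightarrow>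
     DInFL_frame_morphism F G f \<and> (\<forall>x\<in>W F. f (fng F x) = fng G (f x))"

definition lower_adj :: "('a::complete_lattice \<Rightarrow> 'b::complete_lattice) \<Rightarrow> 'b \<Rightarrow> 'a" where
  "lower_adj h b = Inf {a. b \<le> h a}"

end

theory Submission
  imports Defs
begin

text \<open>In a complete perfect distributive lattice the completely join-irreducibles are completely
  join-prime, and \<open>kappa j\<close> is the largest element not above \<open>j\<close>. The map \<open>h\<^sub>+\<close> is the
  lower adjoint of \<open>h\<close>, so \<open>h\<^sub>+ b \<le> a \<longleftrightarrow> b \<le> h a\<close>; it preserves complete join-primeness, and
  each frame condition is obtained by transporting an inequality across this adjunction.
  The unary operations of a DqRA form order-reversing Galois connections
  (\<open>\<sim>p \<le> q \<longleftrightarrow> -q \<le> p\<close> and \<open>\<not>p \<le> q \<longleftrightarrow> \<not>q \<le> p\<close>), which is what makes them commute with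
  \<open>h\<^sub>+\<close> after composing with \<open>kappa\<close>.\<close>

lemma DqRA_mul_le_iff_left:
  "is_DqRA A \<Longrightarrow> mul A a b \<le> c \<longleftrightarrow> a \<le> mn A (mul A b (tl A c))"
  unfolding is_DqRA_def by blast

lemma DqRA_mul_le_iff_right:
  "is_DqRA A \<Longrightarrow> mul A a b \<le> c \<longleftrightarrow> b \<le> tl A (mul A (mn A c) a)"
  unfolding is_DqRA_def by blast

lemma DqRA_one_mul: "is_DqRA A \<Longrightarrow> mul A (one A) a = a"
  unfolding is_DqRA_def by blast

lemma DqRA_mul_one: "is_DqRA A \<Longrightarrow> mul A a (one A) = a"
  unfolding is_DqRA_def by blast

lemma DqRA_inf_sup_distrib:
  fixes A :: "('a::lattice, 'b) dqra_ops_scheme" and a b c :: 'a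
  shows "is_DqRA A \<Longrightarrow> inf a (sup b c) = sup (inf a b) (inf a c)"
  unfolding is_DqRA_def by blast

lemma DqRA_mn_tl:
  assumes "is_DqRA A"
  shows "mn A (tl A c) = c"
proof (rule order.antisym)
  have "\<And>a. a \<le> c \<longleftrightarrow> a \<le> mn A (tl A c)"
    using DqRA_mul_le_iff_left[OF assms, of _ "one A" c] by (simp add: DqRA_one_mul DqRA_mul_one assms)
  then show "mn A (tl A c) \<le> c" and "c \<le> mn A (tl A c)" by blast+
qed

lemma DqRA_tl_mn:
  assumes "is_DqRA A"
  shows "tl A (mn A c) = c"
proof (rule order.antisym)
  have "\<And>b. b \<le> c \<longleftrightarrow> b \<le> tl A (mn A c)"
    using DqRA_mul_le_iff_right[OF assms, of "one A" _ c] by (simp add: DqRA_one_mul DqRA_mul_one assms)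
  then show "tl A (mn A c) \<le> c" and "c \<le> tl A (mn A c)" by blast+
qed

lemma DqRA_mul_mono:
  assumes "is_DqRA A" and "a \<le> a'" and "b \<le> b'"
  shows "mul A a b \<le> mul A a' b'"
proof -
  have "a \<le> mn A (mul A b (tl A (mul A a' b)))"
    using assms(2) DqRA_mul_le_iff_left[OF assms(1), of a' b] order_trans by blast
  then have "mul A a b \<le> mul A a' b"
    using DqRA_mul_le_iff_left[OF assms(1)] by blast
  moreover have "b \<le> tl A (mul A (mn A (mul A a' b')) a')"
    using assms(3) DqRA_mul_le_iff_right[OF assms(1), of a' b'] order_trans by blast
  then have "mul A a' b \<le> mul A a' b'"
    using DqRA_mul_le_iff_right[OF assms(1)] by blast
  ultimately show ?thesis by (rule order_trans)
qed

lemma DqRA_tl_antimono: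
  assumes "is_DqRA A" and "x \<le> y"
  shows "tl A y \<le> tl A x"
proof -
  have tl_iff: "\<And>a b. b \<le> tl A a \<longleftrightarrow> mul A a b \<le> tl A (one A)"
    using DqRA_mul_le_iff_right[OF assms(1), where c = "tl A (one A)"]
    by (simp add: DqRA_mn_tl DqRA_one_mul assms(1))
  have "mul A x (tl A y) \<le> mul A y (tl A y)"
    using DqRA_mul_mono[OF assms(1) assms(2) order.refl] .
  also have "\<dots> \<le> tl A (one A)" using tl_iff by blast
  finally show ?thesis using tl_iff by blast
qed

lemma DqRA_mn_antimono:
  assumes "is_DqRA A" and "x \<le> y"
  shows "mn A y \<le> mn A x"
proof -
  have mn_iff: "\<And>a b. a \<le> mn A b \<longleftrightarrow> mul A a b \<le> mn A (one A)"
    using DqRA_mul_le_iff_left[OF assms(1), where c = "mn A (one A)"]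
    by (simp add: DqRA_tl_mn DqRA_mul_one assms(1))
  have "mul A (mn A y) x \<le> mul A (mn A y) y"
    using DqRA_mul_mono[OF assms(1) order.refl assms(2)] .
  also have "\<dots> \<le> mn A (one A)" using mn_iff by blast
  finally show ?thesis using mn_iff by blast
qed

lemma DqRA_tl_le_iff: "is_DqRA A \<Longrightarrow> tl A p \<le> q \<longleftrightarrow> mn A q \<le> p"
  by (metis DqRA_mn_antimono DqRA_mn_tl DqRA_tl_antimono DqRA_tl_mn)

lemma DqRA_mn_le_iff: "is_DqRA A \<Longrightarrow> mn A p \<le> q \<longleftrightarrow> tl A q \<le> p"
  by (metis DqRA_tl_le_iff)

lemma DqRA_ng_ng: "is_DqRA A \<Longrightarrow> ng A (ng A a) = a"
  unfolding is_DqRA_def by blast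

lemma DqRA_ng_inf: "is_DqRA A \<Longrightarrow> ng A (inf a b) = sup (ng A a) (ng A b)"
  unfolding is_DqRA_def by blast

lemma DqRA_ng_antimono:
  assumes "is_DqRA A" and "x \<le> y"
  shows "ng A y \<le> ng A x"
proof -
  have "ng A x = sup (ng A x) (ng A y)"
    using DqRA_ng_inf[OF assms(1), of x y] assms(2) by (simp add: inf.absorb1)
  then show ?thesis by (metis sup.cobounded2)
qed

lemma DqRA_ng_le_iff: "is_DqRA A \<Longrightarrow> ng A p \<le> q \<longleftrightarrow> ng A q \<le> p"
  by (metis DqRA_ng_antimono DqRA_ng_ng)

lemma DqRA_mul_Sup_le:
  fixes A :: "('a::complete_lattice, 'b) dqra_ops_scheme"
  assumes "is_DqRA A"
  shows "mul A (Sup X) (Sup Y) \<le> Sup {mul A x y | x y. x \<in> X \<and> y \<in> Y}"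
    (is "_ \<le> ?c")
proof -
  have "x \<le> mn A (mul A (Sup Y) (tl A ?c))" if "x \<in> X" for x
  proof -
    have "y \<le> tl A (mul A (mn A ?c) x)" if "y \<in> Y" for y
      using \<open>x \<in> X\<close> that DqRA_mul_le_iff_right[OF assms] by (blast intro: Sup_upper)
    then have "mul A x (Sup Y) \<le> ?c"
      using DqRA_mul_le_iff_right[OF assms] by (blast intro: Sup_least)
    then show ?thesis using DqRA_mul_le_iff_left[OF assms] by blast
  qed
  then show ?thesis using DqRA_mul_le_iff_left[OF assms] by (blast intro: Sup_least)
qed

definition Jprime :: "'a::complete_lattice set" where
  "Jprime = {j. \<forall>S. j \<le> Sup S \<longrightarrow> (\<exists>s\<in>S. j \<le> s)}"

lemma Jprime_subset_Jinf: "Jprime \<subseteq> Jinf"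
proof
  fix j :: 'a
  assume j: "j \<in> Jprime"
  have "j \<in> S" if "j = Sup S" for S
  proof -
    obtain s where "s \<in> S" "j \<le> s" using j \<open>j = Sup S\<close> unfolding Jprime_def by blast
    then show ?thesis using \<open>j = Sup S\<close> by (metis Sup_upper order.antisym)
  qed
  then show "j \<in> Jinf" unfolding Jinf_def by blast
qed

lemma Jinf_Sup_less:
  assumes "j \<in> Jinf"
  shows "Sup {x. x < j} < j"
proof -
  have "Sup {x. x < j} \<noteq> j"
  proof
    assume "Sup {x. x < j} = j"
    then have "j = Sup {x. x < j}" by (rule sym)
    then have "j \<in> {x. x < j}" using assms unfolding Jinf_def by blast
    then show False by simp
  qed
  moreover have "Sup {x. x < j} \<le> j" by (rule Sup_least) simp
  ultimately show ?thesis by simp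
qed

lemma Jprime_le_kappa_iff:
  assumes "j \<in> Jprime"
  shows "a \<le> kappa j \<longleftrightarrow> \<not> j \<le> a"
proof
  have "\<not> j \<le> kappa j"
    using assms unfolding Jprime_def kappa_def by blast
  then show "\<not> j \<le> a" if "a \<le> kappa j" using that order_trans by blast
  show "a \<le> kappa j" if "\<not> j \<le> a" using that unfolding kappa_def by (simp add: Sup_upper)
qed

text \<open>Every element not above \<open>j\<close> lies below \<open>m\<close>: otherwise \<open>m = (m \<squnion> a) \<sqinter> (m \<squnion> j)\<close> would
  split \<open>m\<close> into two strictly larger elements.\<close>

lemma le_Minf_if_not_ge:
  fixes m :: "'a::complete_lattice"
  assumes distrib: "\<And>x y z::'a. inf x (sup y z) = sup (inf x y) (inf x z)"
    and m: "m \<in> Minf" and below_j: "\<And>x. x < j \<Longrightarrow> x \<le> m" and "\<not> j \<le> m" and "\<not> j \<le> a"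
  shows "a \<le> m"
proof -
  have "inf a j \<le> m" using below_j \<open>\<not> j \<le> a\<close> by (metis inf.cobounded1 inf.cobounded2 less_le)
  then have "m = sup m (inf a j)" by (simp add: sup.absorb1)
  also have "\<dots> = Inf {sup m a, sup m j}" using distrib_imp1[OF distrib] by simp
  finally have "m = sup m a \<or> m = sup m j" using m unfolding Minf_def by blast
  then show ?thesis using \<open>\<not> j \<le> m\<close> by (metis sup.cobounded2)
qed

lemma Jinf_subset_Jprime:
  assumes distrib: "\<And>x y z::'a::complete_lattice. inf x (sup y z) = sup (inf x y) (inf x z)"
    and meet_dense: "\<And>a::'a. a = Inf {m \<in> Minf. a \<le> m}"
  shows "(Jinf :: 'a set) \<subseteq> Jprime"
proof
  fix j :: 'a
  assume j: "j \<in> Jinf"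
  define js where "js = Sup {x. x < j}"
  have "\<not> j \<le> js" using Jinf_Sup_less[OF j] unfolding js_def by auto
  have "\<exists>m\<in>Minf. js \<le> m \<and> \<not> j \<le> m"
  proof (rule ccontr)
    assume "\<not> ?thesis"
    then have "j \<le> Inf {m \<in> Minf. js \<le> m}" by (auto intro: Inf_greatest)
    also have "\<dots> = js" by (rule meet_dense[symmetric])
    finally show False using \<open>\<not> j \<le> js\<close> by contradiction
  qed
  then obtain m where m: "m \<in> Minf" "js \<le> m" "\<not> j \<le> m" by blast
  have below_j: "x \<le> m" if "x < j" for x
  proof -
    have "x \<le> js" unfolding js_def using that by (simp add: Sup_upper)
    then show ?thesis using m(2) by (rule order_trans)
  qed
  show "j \<in> Jprime" unfolding Jprime_def
  proof (intro CollectI allI impI)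
    fix S
    assume "j \<le> Sup S"
    show "\<exists>s\<in>S. j \<le> s"
    proof (rule ccontr)
      assume "\<not> ?thesis"
      then have "Sup S \<le> m"
        by (auto intro!: Sup_least le_Minf_if_not_ge[OF distrib m(1) below_j m(3)])
      with \<open>j \<le> Sup S\<close> have "j \<le> m" by (rule order_trans)
      with m(3) show False by contradiction
    qed
  qed
qed

lemma perfect_Sup_Jinf: "perfect TYPE('a::complete_lattice) \<Longrightarrow> (a::'a) = Sup {j \<in> Jinf. j \<le> a}"
  unfolding perfect_def by blast

lemma complete_perfect_DqRA_Jinf_eq_Jprime:
  fixes A :: "('a::complete_lattice, 'b) dqra_ops_scheme"
  assumes "complete_perfect_DqRA A"
  shows "(Jinf :: 'a set) = Jprime"
proof -
  have "is_DqRA A" and "perfect TYPE('a)" using assms unfolding complete_perfect_DqRA_def by auto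
  then have "(Jinf :: 'a set) \<subseteq> Jprime"
    by (intro Jinf_subset_Jprime DqRA_inf_sup_distrib) (auto simp: perfect_def)
  then show ?thesis using Jprime_subset_Jinf by blast
qed

lemma mono_if_preserves_Inf:
  fixes h :: "'a::complete_lattice \<Rightarrow> 'b::complete_lattice"
  assumes "\<And>S. h (Inf S) = Inf (h ` S)"
  shows "mono h"
proof
  show "h x \<le> h y" if "x \<le> y" for x y
    using assms[of "{x, y}"] that by (simp add: inf.absorb1 le_iff_inf)
qed

lemma le_h_lower_adj:
  assumes h_Inf: "\<And>S. h (Inf S) = Inf (h ` S)"
  shows "b \<le> h (lower_adj h b)"
  unfolding lower_adj_def h_Inf by (auto intro: INF_greatest)

lemma lower_adj_le_iff:
  fixes h :: "'a::complete_lattice \<Rightarrow> 'b::complete_lattice"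
  assumes h_Inf: "\<And>S. h (Inf S) = Inf (h ` S)"
  shows "lower_adj h b \<le> a \<longleftrightarrow> b \<le> h a"
proof
  show "b \<le> h a" if "lower_adj h b \<le> a"
    using le_h_lower_adj[OF h_Inf] monoD[OF mono_if_preserves_Inf[OF h_Inf] that]
    by (rule order_trans)
  show "lower_adj h b \<le> a" if "b \<le> h a"
    unfolding lower_adj_def using that by (auto intro: Inf_lower)
qed

lemma lower_adj_mono:
  assumes h_Inf: "\<And>S. h (Inf S) = Inf (h ` S)" and "b' \<le> b"
  shows "lower_adj h b' \<le> lower_adj h b"
proof -
  from \<open>b' \<le> b\<close> le_h_lower_adj[OF h_Inf] have "b' \<le> h (lower_adj h b)" by (rule order_trans)
  then show ?thesis using lower_adj_le_iff[OF h_Inf] by blast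
qed

lemma h_lower_adj_if_surj:
  assumes "\<And>S. h (Inf S) = Inf (h ` S)" and "surj h"
  shows "h (lower_adj h b) = b"
proof -
  obtain a where "b = h a" using \<open>surj h\<close> by (metis surjD)
  then have "h (lower_adj h b) \<le> b"
    using lower_adj_le_iff[OF assms(1)] monoD[OF mono_if_preserves_Inf[OF assms(1)]] by blast
  then show ?thesis using le_h_lower_adj[OF assms(1)] by (rule order.antisym)
qed

lemma lower_adj_Jprime:
  assumes h_Inf: "\<And>S. h (Inf S) = Inf (h ` S)" and h_Sup: "\<And>S. h (Sup S) = Sup (h ` S)"
    and "b \<in> Jprime"
  shows "lower_adj h b \<in> Jprime"
  unfolding Jprime_def
proof (intro CollectI allI impI)
  fix S
  assume "lower_adj h b \<le> Sup S"
  then have "b \<le> Sup (h ` S)" using lower_adj_le_iff[OF h_Inf] h_Sup by metis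
  then obtain s where "s \<in> S" "b \<le> h s" using \<open>b \<in> Jprime\<close> unfolding Jprime_def by blast
  then show "\<exists>s\<in>S. lower_adj h b \<le> s" using lower_adj_le_iff[OF h_Inf] by blast
qed

text \<open>Instantiated with \<open>(\<sigma>, \<tau>)\<close> equal to \<open>(\<sim>, -)\<close>, \<open>(-, \<sim>)\<close> and \<open>(\<not>, \<not>)\<close>, this gives the
  conditions (M4), (M5) and (M7).\<close>

lemma lower_adj_kappa_commute:
  fixes h :: "'a::complete_lattice \<Rightarrow> 'b::complete_lattice"
  assumes h_Inf: "\<And>S. h (Inf S) = Inf (h ` S)"
    and galois_A: "\<And>p q. \<sigma>\<^sub>A p \<le> q \<longleftrightarrow> \<tau>\<^sub>A q \<le> p"
    and galois_B: "\<And>p q. \<sigma>\<^sub>B p \<le> q \<longleftrightarrow> \<tau>\<^sub>B q \<le> p"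
    and h_\<tau>: "\<And>a. h (\<tau>\<^sub>A a) = \<tau>\<^sub>B (h a)"
    and x: "x \<in> Jprime" and fx: "lower_adj h x \<in> Jprime"
  shows "lower_adj h (\<sigma>\<^sub>B (kappa x)) = \<sigma>\<^sub>A (kappa (lower_adj h x))"
proof -
  have "lower_adj h (\<sigma>\<^sub>B (kappa x)) \<le> a \<longleftrightarrow> \<sigma>\<^sub>A (kappa (lower_adj h x)) \<le> a" for a
  proof -
    have "lower_adj h (\<sigma>\<^sub>B (kappa x)) \<le> a \<longleftrightarrow> \<tau>\<^sub>B (h a) \<le> kappa x"
      using lower_adj_le_iff[OF h_Inf] galois_B by blast
    also have "\<dots> \<longleftrightarrow> \<not> x \<le> h (\<tau>\<^sub>A a)" using Jprime_le_kappa_iff[OF x] h_\<tau> by simp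
    also have "\<dots> \<longleftrightarrow> \<tau>\<^sub>A a \<le> kappa (lower_adj h x)"
      using lower_adj_le_iff[OF h_Inf] Jprime_le_kappa_iff[OF fx] by blast
    also have "\<dots> \<longleftrightarrow> \<sigma>\<^sub>A (kappa (lower_adj h x)) \<le> a" using galois_A by blast
    finally show ?thesis .
  qed
  then show ?thesis by (metis order.antisym order.refl)
qed

lemma lower_adj_le_mul:
  assumes "is_DqRA B" and h_Inf: "\<And>S. h (Inf S) = Inf (h ` S)"
    and h_mul: "\<And>a b. h (mul A a b) = mul B (h a) (h b)"
    and "z \<le> mul B x y"
  shows "lower_adj h z \<le> mul A (lower_adj h x) (lower_adj h y)"
proof -
  have "mul B x y \<le> mul B (h (lower_adj h x)) (h (lower_adj h y))"
    using lower_adj_le_iff[OF h_Inf] by (blast intro: DqRA_mul_mono[OF \<open>is_DqRA B\<close>])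
  then show ?thesis
    using \<open>z \<le> mul B x y\<close> lower_adj_le_iff[OF h_Inf] h_mul by (metis order_trans)
qed

lemma lower_adj_le_mul_lift:
  fixes A :: "('a::complete_lattice, 'c) dqra_ops_scheme"
    and B :: "('b::complete_lattice, 'd) dqra_ops_scheme"
  assumes "is_DqRA B" and join_dense: "\<And>b::'b. b = Sup {j \<in> Jinf. j \<le> b}"
    and h_Inf: "\<And>S. h (Inf S) = Inf (h ` S)"
    and h_mul: "\<And>a b. h (mul A a b) = mul B (h a) (h b)"
    and z: "z \<in> Jprime" and "lower_adj h z \<le> mul A u v"
  shows "\<exists>x\<in>Jinf. \<exists>y\<in>Jinf. lower_adj h x \<le> u \<and> lower_adj h y \<le> v \<and> z \<le> mul B x y"
proof -
  define X where "X = {j \<in> Jinf. j \<le> h u}"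
  define Y where "Y = {j \<in> Jinf. j \<le> h v}"
  have "z \<le> mul B (Sup X) (Sup Y)"
    using \<open>lower_adj h z \<le> mul A u v\<close> lower_adj_le_iff[OF h_Inf] h_mul join_dense
    unfolding X_def Y_def by metis
  also have "\<dots> \<le> Sup {mul B x y | x y. x \<in> X \<and> y \<in> Y}"
    by (rule DqRA_mul_Sup_le[OF \<open>is_DqRA B\<close>])
  finally obtain x y where "x \<in> X" "y \<in> Y" "z \<le> mul B x y"
    using z unfolding Jprime_def by blast
  then show ?thesis
    unfolding X_def Y_def using lower_adj_le_iff[OF h_Inf] by blast
qed

text \<open>If \<open>j\<close> is not in the image, every join-irreducible below \<open>h j\<close> lies below
  \<open>h (kappa j)\<close>; so \<open>h j \<le> h (kappa j)\<close>, and injectivity gives \<open>j \<le> kappa j\<close>.\<close>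

lemma Jprime_in_lower_adj_image_if_inj:
  fixes h :: "'a::complete_lattice \<Rightarrow> 'b::complete_lattice"
  assumes h_Inf: "\<And>S. h (Inf S) = Inf (h ` S)" and "inj h"
    and join_dense: "\<And>b::'b. b = Sup {j \<in> Jinf. j \<le> b}"
    and j: "j \<in> Jprime"
  shows "j \<in> lower_adj h ` Jinf"
proof (rule ccontr)
  assume not_image: "j \<notin> lower_adj h ` Jinf"
  have "c \<le> h (kappa j)" if "c \<in> Jinf" "c \<le> h j" for c
  proof -
    have "lower_adj h c \<le> j" "lower_adj h c \<noteq> j"
      using that not_image lower_adj_le_iff[OF h_Inf] by auto
    then have "lower_adj h c \<le> kappa j" using Jprime_le_kappa_iff[OF j] by auto
    then show ?thesis using lower_adj_le_iff[OF h_Inf] by blast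
  qed
  then have "h j \<le> h (kappa j)" using join_dense[of "h j"] by (metis (mono_tags) Sup_least mem_Collect_eq)
  then have "h (inf j (kappa j)) = h j"
    using h_Inf[of "{j, kappa j}"] by (simp add: inf.absorb1)
  then have "j \<le> kappa j" using \<open>inj h\<close> by (metis injD inf.cobounded2)
  then show False using Jprime_le_kappa_iff[OF j] by blast
qed

lemma complete_hom_lower_adj_DqRA_frame_morphism:
  fixes A :: "('a::complete_lattice, 'c) dqra_ops_scheme"
    and B :: "('b::complete_lattice, 'd) dqra_ops_scheme"
  assumes cpA: "complete_perfect_DqRA A" and cpB: "complete_perfect_DqRA B"
    and hom: "complete_hom A B h"
  shows "DqRA_frame_morphism (dual_frame B) (dual_frame A) (lower_adj h)"
proof -
  have A: "is_DqRA A" and B: "is_DqRA B" and join_dense: "\<And>b::'b. b = Sup {j \<in> Jinf. j \<le> b}"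
    using cpA cpB perfect_Sup_Jinf unfolding complete_perfect_DqRA_def by auto
  note JA = complete_perfect_DqRA_Jinf_eq_Jprime[OF cpA, symmetric]
  note JB = complete_perfect_DqRA_Jinf_eq_Jprime[OF cpB, symmetric]
  have h_Inf: "\<And>S. h (Inf S) = Inf (h ` S)" and h_Sup: "\<And>S. h (Sup S) = Sup (h ` S)"
    and h_mul: "\<And>a b. h (mul A a b) = mul B (h a) (h b)" and h_one: "h (one A) = one B"
    and h_tl: "\<And>a. h (tl A a) = tl B (h a)" and h_mn: "\<And>a. h (mn A a) = mn B (h a)"
    and h_ng: "\<And>a. h (ng A a) = ng B (h a)"
    using hom unfolding complete_hom_def by auto
  have Jinf_to_Jinf: "lower_adj h x \<in> Jinf" if "x \<in> Jinf" for x :: 'b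
    using lower_adj_Jprime[OF h_Inf h_Sup, unfolded JA JB, OF that] .
  note kappa_commute = lower_adj_kappa_commute[OF h_Inf, unfolded JA JB, OF _ _ _ _ Jinf_to_Jinf]
  have tl_commute: "lower_adj h (tl B (kappa x)) = tl A (kappa (lower_adj h x))" if "x \<in> Jinf" for x
    using kappa_commute[OF DqRA_tl_le_iff[OF A] DqRA_tl_le_iff[OF B] h_mn that that] .
  have mn_commute: "lower_adj h (mn B (kappa x)) = mn A (kappa (lower_adj h x))" if "x \<in> Jinf" for x
    using kappa_commute[OF DqRA_mn_le_iff[OF A] DqRA_mn_le_iff[OF B] h_tl that that] .
  have ng_commute: "lower_adj h (ng B (kappa x)) = ng A (kappa (lower_adj h x))" if "x \<in> Jinf" for x
    using kappa_commute[OF DqRA_ng_le_iff[OF A] DqRA_ng_le_iff[OF B] h_ng that that] .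
  have unit_set: "{i \<in> Jinf. i \<le> one B} = {x \<in> Jinf. lower_adj h x \<in> {i \<in> Jinf. i \<le> one A}}"
    using Jinf_to_Jinf lower_adj_le_iff[OF h_Inf] h_one by auto
  have circ_lift: "\<exists>x\<in>Jinf. \<exists>y\<in>Jinf. lower_adj h x \<le> u \<and> lower_adj h y \<le> v \<and> z \<le> mul B x y"
    if "z \<in> Jinf" and "lower_adj h z \<le> mul A u v" for z u v
    using lower_adj_le_mul_lift[where h = h, OF B join_dense h_Inf h_mul, unfolded JB, OF that] .
  show ?thesis
    unfolding DqRA_frame_morphism_def DInFL_frame_morphism_def dual_frame_def frame.simps
    by (simp add: Jinf_to_Jinf lower_adj_mono[OF h_Inf] lower_adj_le_mul[where h = h, OF B h_Inf h_mul]
        tl_commute mn_commute ng_commute unit_set)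
      (meson circ_lift)
qed

theorem mainTheorem16:
  fixes A :: "('a::complete_lattice) dqra_ops" and B :: "('b::complete_lattice) dqra_ops"
    and h :: "'a \<Rightarrow> 'b"
  assumes "complete_perfect_DqRA A" and "complete_perfect_DqRA B"
    and "complete_hom A B h"
  shows "DqRA_frame_morphism (dual_frame B) (dual_frame A) (lower_adj h)
       \<and> (surj h \<longrightarrow> (\<forall>b\<in>Jinf. \<forall>b'\<in>Jinf.
              prec (dual_frame B) b b' \<longleftrightarrow>
              prec (dual_frame A) (lower_adj h b) (lower_adj h b')))
       \<and> (inj h \<longrightarrow> lower_adj h ` Jinf = Jinf)"
proof (intro conjI impI)
  have h_Inf: "\<And>S. h (Inf S) = Inf (h ` S)" and h_Sup: "\<And>S. h (Sup S) = Sup (h ` S)"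
    using assms(3) unfolding complete_hom_def by auto
  note JA = complete_perfect_DqRA_Jinf_eq_Jprime[OF assms(1)]
  note JB = complete_perfect_DqRA_Jinf_eq_Jprime[OF assms(2)]
  show "DqRA_frame_morphism (dual_frame B) (dual_frame A) (lower_adj h)"
    using complete_hom_lower_adj_DqRA_frame_morphism[OF assms] .
  show "\<forall>b\<in>Jinf. \<forall>b'\<in>Jinf. prec (dual_frame B) b b' \<longleftrightarrow>
          prec (dual_frame A) (lower_adj h b) (lower_adj h b')" if "surj h"
    using lower_adj_le_iff[OF h_Inf] h_lower_adj_if_surj[OF h_Inf that]
    by (simp add: dual_frame_def)
  show "lower_adj h ` Jinf = Jinf" if "inj h"
  proof
    show "lower_adj h ` Jinf \<subseteq> Jinf"
      using lower_adj_Jprime[where h = h, OF h_Inf h_Sup] unfolding JA JB by blast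
    have "perfect TYPE('b)" using assms(2) unfolding complete_perfect_DqRA_def ..
    note join_dense = perfect_Sup_Jinf[OF this]
    show "Jinf \<subseteq> lower_adj h ` Jinf"
      using Jprime_in_lower_adj_image_if_inj[OF h_Inf that join_dense] unfolding JA ..
  qed
qed

end
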